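(* For $n\ge 0$ let $\mathcal P(n,1,1)$ be the set of lattice paths with steps $(1,1)$ (up) and $(1,-1)$ (down) from $(0,0)$ to $(2n+1,1)$, and let $C_n=\frac{1}{n+1}\binom{2n}{n}$. Define formal power series $f,g,h$ by: - $x\,f(x,y)$ is the sum over all $n\ge0$ and all paths in $\mathcal P(n,1,1)$ starting with an up step of $x^{a}y^{b}$, where $a$ is the number of up steps starting on or below the $x$-axis and $b$ the number of up steps starting above the $x$-axis; - $x\,g(x,y)$ is the sum over all $n\ge0$ and all paths in $\mathcal P(n,1,1)$ starting with a down step of $x^{a}y^{b}$, where $a$ is the number of down steps starting on or below the $x$-axis and $b$ the number of down steps starting above the $x$-axis; - $y\,h(x,y)$ is the sum over all $n\ge0$ and all paths in $\mathcal P(n,1,1)$ of $x^{a}y^{b}$, where, among all vertices except the initial vertex, $a$ is the number lying on or below the $x$-axis and $b$ the number lying above the $x$-axis. Then (1) $f(x,y)=\sum_{n\ge0}C_n\sum_{i=0}^{n}x^iy^{n-i}$; (2) $g(x,y)=\sum_{n\ge0}C_{n+1}\sum_{i=0}^{n}x^iy^{n-i}$; (3) $h(x,y)=\sum_{n\ge0}C_n\sum_{i=0}^{2n}x^iy^{2n-i}$.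
   Context: A step starts on or below (resp. above) the $x$-axis if its initial vertex has $y$-coordinate $\le 0$ (resp. $>0$); a vertex lies on or below (resp. above) the $x$-axis if its $y$-coordinate is $\le0$ (resp. $>0$). *)

theory Defs
  imports Main
begin

text \<open>A path is a list of steps: True = up step (1,1), False = down step (1,-1).
  The path starts at (0,0); step k (0-based) goes from vertex k to vertex k+1.\<close>

definition step_val :: "bool \<Rightarrow> int" where
  "step_val s = (if s then 1 else -1)"

definition height :: "bool list \<Rightarrow> nat \<Rightarrow> int" where
  "height p k = sum_list (map step_val (take k p))"

definition lattice_paths :: "nat \<Rightarrow> bool list set" where
  "lattice_paths n = {p. length p = 2 * n + 1 \<and> height p (length p) = 1}"

definition ups_below :: "bool list \<Rightarrow> nat" where
  "ups_below p = card {k. k < length p \<and> p ! k \<and> height p k \<le> 0}"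
definition ups_above :: "bool list \<Rightarrow> nat" where
  "ups_above p = card {k. k < length p \<and> p ! k \<and> height p k > 0}"

definition downs_below :: "bool list \<Rightarrow> nat" where
  "downs_below p = card {k. k < length p \<and> \<not> p ! k \<and> height p k \<le> 0}"
definition downs_above :: "bool list \<Rightarrow> nat" where
  "downs_above p = card {k. k < length p \<and> \<not> p ! k \<and> height p k > 0}"

definition verts_below :: "bool list \<Rightarrow> nat" where
  "verts_below p = card {k. 1 \<le> k \<and> k \<le> length p \<and> height p k \<le> 0}"
definition verts_above :: "bool list \<Rightarrow> nat" where
  "verts_above p = card {k. 1 \<le> k \<and> k \<le> length p \<and> height p k > 0}"

definition catalan :: "nat \<Rightarrow> nat" where
  "catalan n = (2 * n choose n) div (n + 1)"

text \<open>Coefficients of the bivariate formal power series f, g, h: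
  coeff_f i j is the coefficient of x^i y^j in f, i.e. the coefficient of
  x^(i+1) y^j in x f(x,y); similarly for g; coeff_h i j is the coefficient of
  x^i y^(j+1) in y h(x,y).\<close>
definition coeff_f :: "nat \<Rightarrow> nat \<Rightarrow> nat" where
  "coeff_f i j = card {p. (\<exists>n. p \<in> lattice_paths n) \<and> hd p
       \<and> ups_below p = Suc i \<and> ups_above p = j}"
definition coeff_g :: "nat \<Rightarrow> nat \<Rightarrow> nat" where
  "coeff_g i j = card {p. (\<exists>n. p \<in> lattice_paths n) \<and> \<not> hd p
       \<and> downs_below p = Suc i \<and> downs_above p = j}"
definition coeff_h :: "nat \<Rightarrow> nat \<Rightarrow> nat" where
  "coeff_h i j = card {p. (\<exists>n. p \<in> lattice_paths n)
       \<and> verts_below p = i \<and> verts_above p = Suc j}"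

end

theory Submission
  imports Defs "HOL-Library.Product_Lexorder"
begin

text \<open>A cycle-lemma argument. A path in \<open>P(n,1,1)\<close> ends at height 1, so all its \<open>2n+1\<close>
  cyclic rotations lie in \<open>P(n,1,1)\<close> again. Order the vertices \<open>0, \<dots>, 2n\<close> of a path by
  height, breaking ties in favour of the later vertex. In the rotation starting at vertex \<open>k\<close>,
  a vertex lies on or below the axis exactly when it precedes or equals \<open>k\<close> in this order
  (passing the end of the path raises heights by one, which is what the tie-break accounts for).
  Hence the number of non-initial vertices on or below the axis is the rank of \<open>k\<close> minus one,
  and the number of up (down) steps starting on or below it is the rank of \<open>k\<close> among the up
  (down) steps, when \<open>k\<close> starts an up (down) step. So every admissible value of each statistic
  is attained by exactly one rotation, and double counting pairs (path, rotation) shows that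
  each coefficient \<open>c\<close> satisfies \<open>(2n+1) c = binomial (2n+1) (n+1)\<close>, i.e. \<open>c = C\<^sub>n\<close>.\<close>

lemma bij_betw_rank:
  fixes key :: "'a \<Rightarrow> 'b::linorder"
  assumes fin: "finite A" and inj: "inj_on key A"
  shows "bij_betw (\<lambda>k. card {m\<in>A. key m \<le> key k}) A {1..card A}"
proof -
  let ?r = "\<lambda>k. card {m\<in>A. key m \<le> key k}"
  have mono: "?r k < ?r l" if "l \<in> A" "key k < key l" for k l
  proof -
    have "{m\<in>A. key m \<le> key k} \<subseteq> {m\<in>A. key m \<le> key l}"
      using that by (auto intro: order.trans less_imp_le)
    moreover have "l \<in> {m\<in>A. key m \<le> key l} - {m\<in>A. key m \<le> key k}"
      using that by simp
    ultimately have "{m\<in>A. key m \<le> key k} \<subset> {m\<in>A. key m \<le> key l}"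
      by blast
    then show ?thesis using fin by (intro psubset_card_mono) auto
  qed
  have "inj_on ?r A"
  proof (rule inj_onI)
    fix k l assume k: "k \<in> A" and l: "l \<in> A" and eq: "?r k = ?r l"
    show "k = l"
    proof (rule ccontr)
      assume "k \<noteq> l"
      then have "key k < key l \<or> key l < key k" using inj k l by (metis inj_onD linorder_neqE)
      then show False using mono[OF l, of k] mono[OF k, of l] eq by auto
    qed
  qed
  moreover have "?r ` A \<subseteq> {1..card A}"
  proof
    fix x assume "x \<in> ?r ` A"
    then obtain k where k: "k \<in> A" "x = ?r k" by blast
    have "0 < ?r k" using k fin by (auto simp: card_gt_0_iff)
    moreover have "?r k \<le> card A" using fin by (intro card_mono) auto
    ultimately show "x \<in> {1..card A}" using k by simp
  qed
  ultimately show ?thesis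
    by (simp add: bij_betw_def card_image card_subset_eq)
qed

lemma card_bij_betw_fiber:
  assumes "bij_betw f A B" "y \<in> B"
  shows "card {x\<in>A. f x = y} = 1"
proof -
  obtain x where x: "x \<in> A" "f x = y" using assms by (auto simp: bij_betw_def)
  then have "{x\<in>A. f x = y} = {x}" using assms(1) by (auto simp: bij_betw_def inj_on_def)
  then show ?thesis by simp
qed

lemma card_Collect_add_mod:
  fixes N :: nat
  shows "card {j\<in>{..<N}. P ((k + j) mod N)} = card {m\<in>{..<N}. P m}"
proof -
  have "inj_on (\<lambda>j. (k + j) mod N) {..<N}"
  proof (rule linorder_inj_onI')
    fix i j assume "i \<in> {..<N}" "j \<in> {..<N}" "i < j"
    show "(k + i) mod N \<noteq> (k + j) mod N"
    proof
      assume "(k + i) mod N = (k + j) mod N"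
      then obtain s where "k + j = k + i + N * s"
        using \<open>i < j\<close> by (elim mod_eq_nat2E) auto
      then show False using \<open>i < j\<close> \<open>j \<in> {..<N}\<close> by (cases s) auto
    qed
  qed
  then have "bij_betw (\<lambda>j. (k + j) mod N) {..<N} {..<N}"
    by (simp add: bij_betw_def endo_inj_surj subset_eq)
  then have "bij_betw (\<lambda>j. (k + j) mod N) {j\<in>{..<N}. P ((k + j) mod N)} {m\<in>{..<N}. P m}"
    by (rule bij_betw_Collect) simp
  then show ?thesis by (rule bij_betw_same_card)
qed

lemma card_eq_mult_card_rotation_representatives:
  assumes fin: "finite S" and len: "\<And>p. p \<in> S \<Longrightarrow> length p = N"
    and closed: "\<And>p k. p \<in> S \<Longrightarrow> rotate k p \<in> S"
    and unique: "\<And>p. p \<in> S \<Longrightarrow> card {k. k < N \<and> P (rotate k p)} = 1"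
  shows "card S = N * card {q\<in>S. P q}"
proof -
  define T where "T = (SIGMA p:S. {k. k < N \<and> P (rotate k p)})"
  have "card T = (\<Sum>p\<in>S. card {k. k < N \<and> P (rotate k p)})"
    unfolding T_def using fin by (intro card_SigmaI) auto
  also have "\<dots> = card S" using unique by simp
  finally have "card T = card S" .
  moreover have "bij_betw (\<lambda>(p, k). (rotate k p, k)) T ({q\<in>S. P q} \<times> {..<N})"
  proof (rule bij_betw_byWitness[where f' = "\<lambda>(q, k). (rotate (N - k) q, k)"])
    show "\<forall>a\<in>T. (\<lambda>(q, k). (rotate (N - k) q, k)) ((\<lambda>(p, k). (rotate k p, k)) a) = a"
      using len unfolding T_def by (auto simp: rotate_rotate)
    show "\<forall>a\<in>{q\<in>S. P q} \<times> {..<N}. (\<lambda>(p, k). (rotate k p, k)) ((\<lambda>(q, k). (rotate (N - k) q, k)) a) = a"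
      using len by (auto simp: rotate_rotate)
    show "(\<lambda>(p, k). (rotate k p, k)) ` T \<subseteq> {q\<in>S. P q} \<times> {..<N}"
      unfolding T_def using closed by auto
    show "(\<lambda>(q, k). (rotate (N - k) q, k)) ` ({q\<in>S. P q} \<times> {..<N}) \<subseteq> T"
      unfolding T_def using closed len by (auto simp: rotate_rotate)
  qed
  ultimately show ?thesis
    by (simp add: bij_betw_same_card card_cartesian_product mult.commute)
qed

lemma card_filter_add_card_filter_not:
  assumes "finite A"
  shows "card {x\<in>A. P x} + card {x\<in>A. \<not> P x} = card A"
proof -
  have "A = {x\<in>A. P x} \<union> {x\<in>A. \<not> P x}" by blast
  then show ?thesis using assms by (metis (no_types, lifting) card_Un_disjoint disjoint_iff
        finite_Un mem_Collect_eq)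
qed

lemma catalan_eqI:
  assumes "(2 * n + 1) * c = (2 * n + 1) choose (n + 1)"
  shows "c = catalan n"
proof -
  have "Suc (2 * n) * (2 * n choose n) = (Suc (2 * n) choose Suc n) * Suc n"
    by (rule Suc_times_binomial_eq)
  also have "Suc (2 * n) choose Suc n = Suc (2 * n) * c"
    using assms by simp
  finally have "Suc (2 * n) * (2 * n choose n) = Suc (2 * n) * (c * Suc n)"
    by (simp only: mult.assoc)
  then have "2 * n choose n = c * Suc n" by (metis Zero_not_Suc mult_left_cancel)
  then show ?thesis unfolding catalan_def by (metis Suc_eq_plus1 div_mult_self_is_m zero_less_Suc)
qed

definition positions :: "bool \<Rightarrow> bool list \<Rightarrow> nat set" where
  "positions b p = {k. k < length p \<and> p ! k = b}"

definition steps_below :: "bool \<Rightarrow> bool list \<Rightarrow> nat" where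
  "steps_below b p = card {k\<in>positions b p. height p k \<le> 0}"

definition steps_above :: "bool \<Rightarrow> bool list \<Rightarrow> nat" where
  "steps_above b p = card {k\<in>positions b p. height p k > 0}"

lemma steps_below_above_simps:
  "steps_below True = ups_below" "steps_above True = ups_above"
  "steps_below False = downs_below" "steps_above False = downs_above"
  by (simp_all add: fun_eq_iff steps_below_def steps_above_def positions_def ups_below_def
      ups_above_def downs_below_def downs_above_def)

lemma steps_below_add_steps_above: "steps_below b p + steps_above b p = card (positions b p)"
  unfolding steps_below_def steps_above_def not_le[symmetric]
  by (rule card_filter_add_card_filter_not) (simp add: positions_def)

lemma card_positions_True_add_False:
  "card (positions True p) + card (positions False p) = length p"
  using card_filter_add_card_filter_not[of "{..<length p}" "\<lambda>k. p ! k"]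
  by (simp add: positions_def)

lemma verts_below_add_verts_above: "verts_below p + verts_above p = length p"
  using card_filter_add_card_filter_not[of "{1..length p}" "\<lambda>k. height p k \<le> 0"]
  by (simp add: verts_below_def verts_above_def not_le)

lemma height_0 [simp]: "height p 0 = 0"
  by (simp add: height_def)

lemma height_length: "height p (length p) = 2 * int (card (positions True p)) - int (length p)"
proof -
  have "sum_list (map step_val p) = 2 * int (length (filter id p)) - int (length p)"
    by (induction p) (auto simp: step_val_def)
  then show ?thesis
    by (simp add: height_def positions_def length_filter_conv_card)
qed

lemma lattice_paths_iff:
  "p \<in> lattice_paths n \<longleftrightarrow> length p = 2 * n + 1 \<and> card (positions True p) = n + 1"
  unfolding lattice_paths_def using height_length[of p] by auto

lemma card_positions_lattice_path:
  assumes "p \<in> lattice_paths n"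
  shows "card (positions b p) = (if b then n + 1 else n)"
  using assms card_positions_True_add_False[of p] by (auto simp: lattice_paths_iff)

lemma finite_lattice_paths: "finite (lattice_paths n)"
proof -
  have "lattice_paths n \<subseteq> {p. set p \<subseteq> UNIV \<and> length p = 2 * n + 1}"
    by (auto simp: lattice_paths_def)
  then show ?thesis using finite_lists_length_eq[of "UNIV :: bool set"] finite_subset by auto
qed

lemma card_lattice_paths: "card (lattice_paths n) = (2 * n + 1) choose (n + 1)"
proof -
  let ?N = "2 * n + 1"
  let ?path = "\<lambda>B. map (\<lambda>k. k \<in> B) [0..<?N]"
  have "bij_betw (positions True) (lattice_paths n) {B. B \<subseteq> {..<?N} \<and> card B = n + 1}"
  proof (rule bij_betw_byWitness[where f' = ?path])
    show "\<forall>p\<in>lattice_paths n. ?path (positions True p) = p"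
      by (auto simp: lattice_paths_iff positions_def simp del: upt_Suc intro!: nth_equalityI)
    show "\<forall>B\<in>{B. B \<subseteq> {..<?N} \<and> card B = n + 1}. positions True (?path B) = B"
      by (auto simp: positions_def simp del: upt_Suc)
    show "positions True ` lattice_paths n \<subseteq> {B. B \<subseteq> {..<?N} \<and> card B = n + 1}"
      by (auto simp: lattice_paths_iff positions_def)
    have "positions True (?path B) = B" if "B \<subseteq> {..<?N}" for B
      using that by (auto simp: positions_def simp del: upt_Suc)
    then show "?path ` {B. B \<subseteq> {..<?N} \<and> card B = n + 1} \<subseteq> lattice_paths n"
      by (auto simp: lattice_paths_iff)
  qed
  then have "card (lattice_paths n) = card {B. B \<subseteq> {..<?N} \<and> card B = n + 1}"
    by (rule bij_betw_same_card)
  also have "\<dots> = ?N choose (n + 1)"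
    using n_subsets[of "{..<?N}" "n + 1"] by simp
  finally show ?thesis .
qed

lemma sum_list_rotate: "sum_list (rotate k xs) = sum_list (xs :: 'a::comm_monoid_add list)"
  by (metis rotate_drop_take sum_list_append append_take_drop_id add.commute)

lemma rotate_in_lattice_paths:
  assumes "p \<in> lattice_paths n"
  shows "rotate k p \<in> lattice_paths n"
proof -
  have "height (rotate k p) (length p) = height p (length p)"
    by (simp add: height_def rotate_map[symmetric] sum_list_rotate)
  then show ?thesis using assms unfolding lattice_paths_def by auto
qed

lemma height_rotate:
  assumes k: "k < length p" and j: "j \<le> length p"
  shows "height (rotate k p) j =
    (if k + j < length p then height p (k + j)
     else height p (k + j - length p) + height p (length p)) - height p k"
proof -
  let ?N = "length p"
  have rot: "rotate k p = drop k p @ take k p"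
    using k by (simp add: rotate_drop_take)
  have take_add: "height p (k + i) = height p k + sum_list (map step_val (take i (drop k p)))" for i
    by (simp add: height_def take_add)
  show ?thesis
  proof (cases "k + j < ?N")
    case True
    then show ?thesis using take_add[of j] by (simp add: height_def rot)
  next
    case False
    have "take j (rotate k p) = drop k p @ take (k + j - ?N) p"
      using False k j by (simp add: rot min_absorb1 ac_simps)
    moreover have "height p ?N = height p k + sum_list (map step_val (drop k p))"
      using take_add[of "?N - k"] k by simp
    ultimately show ?thesis using False by (simp add: height_def)
  qed
qed

text \<open>The order on vertices described in the header, as a key into the lexicographic order.\<close>

definition height_key :: "bool list \<Rightarrow> nat \<Rightarrow> int \<times> int" where
  "height_key p m = (height p m, - int m)"

lemma inj_height_key: "inj (height_key p)"
  by (auto simp: inj_def height_key_def)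

lemma height_rotate_nonpos_iff:
  assumes ends_at_1: "height p (length p) = 1" and k: "k < length p" and j: "j < length p"
  shows "height (rotate k p) j \<le> 0 \<longleftrightarrow>
    height_key p ((k + j) mod length p) \<le> height_key p k"
proof (cases "k + j < length p")
  case True
  have m: "(k + j) mod length p = k + j" using True by simp
  have "height (rotate k p) j = height p (k + j) - height p k"
    using height_rotate[OF k, of j] True j by simp
  then show ?thesis unfolding m height_key_def by auto
next
  case False
  have m: "(k + j) mod length p = k + j - length p"
    using False j k by (simp add: le_mod_geq)
  have "height (rotate k p) j = height p (k + j - length p) + 1 - height p k"
    using height_rotate[OF k, of j] False j ends_at_1 by simp
  then show ?thesis unfolding m height_key_def using False j k by auto
qed

lemma verts_below_rotate:
  assumes ends_at_1: "height p (length p) = 1" and k: "k < length p"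
  shows "Suc (verts_below (rotate k p)) =
    card {m\<in>{..<length p}. height_key p m \<le> height_key p k}"
proof -
  let ?N = "length p" and ?q = "rotate k p"
  have "height ?q ?N = 1"
    using height_rotate[OF k, of ?N] ends_at_1 k by simp
  then have "verts_below ?q = card ({j\<in>{..<?N}. height ?q j \<le> 0} - {0})"
    unfolding verts_below_def by (intro arg_cong[where f = card]) (force simp: le_less)
  also have "Suc \<dots> = card {j\<in>{..<?N}. height ?q j \<le> 0}"
    using k by (intro card_Suc_Diff1) auto
  finally have "Suc (verts_below ?q) = card {j\<in>{..<?N}. height ?q j \<le> 0}" .
  also have "\<dots> = card {j\<in>{..<?N}. height_key p ((k + j) mod ?N) \<le> height_key p k}"
    using height_rotate_nonpos_iff[OF ends_at_1 k] by (intro arg_cong[where f = card]) auto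
  also have "\<dots> = card {m\<in>{..<?N}. height_key p m \<le> height_key p k}"
    by (rule card_Collect_add_mod)
  finally show ?thesis .
qed

lemma steps_below_rotate:
  assumes ends_at_1: "height p (length p) = 1" and k: "k < length p"
  shows "steps_below b (rotate k p) = card {m\<in>positions b p. height_key p m \<le> height_key p k}"
proof -
  let ?N = "length p"
  have "steps_below b (rotate k p) =
      card {j\<in>{..<?N}. p ! ((k + j) mod ?N) = b \<and> height_key p ((k + j) mod ?N) \<le> height_key p k}"
    unfolding steps_below_def positions_def using height_rotate_nonpos_iff[OF ends_at_1 k]
    by (intro arg_cong[where f = card]) (auto simp: nth_rotate)
  also have "\<dots> = card {m\<in>{..<?N}. p ! m = b \<and> height_key p m \<le> height_key p k}"
    by (rule card_Collect_add_mod)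
  finally show ?thesis by (simp add: positions_def)
qed

lemma card_rotations_verts_below:
  assumes p: "p \<in> lattice_paths n" and i: "i < 2 * n + 1"
  shows "card {k. k < 2 * n + 1 \<and> verts_below (rotate k p) = i} = 1"
proof -
  let ?rank = "\<lambda>k. card {m\<in>{..<2 * n + 1}. height_key p m \<le> height_key p k}"
  have "{k. k < 2 * n + 1 \<and> verts_below (rotate k p) = i} = {k\<in>{..<2 * n + 1}. ?rank k = Suc i}"
    using verts_below_rotate[of p] p by (force simp: lattice_paths_def)
  also have "card \<dots> = 1"
    by (rule card_bij_betw_fiber[OF bij_betw_rank])
      (use i in \<open>auto intro: inj_on_subset[OF inj_height_key]\<close>)
  finally show ?thesis .
qed

lemma card_rotations_hd_steps_below:
  assumes p: "p \<in> lattice_paths n" and i: "i < card (positions b p)"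
  shows "card {k. k < 2 * n + 1 \<and> hd (rotate k p) = b \<and> steps_below b (rotate k p) = Suc i} = 1"
proof -
  let ?rank = "\<lambda>k. card {m\<in>positions b p. height_key p m \<le> height_key p k}"
  have len: "length p = 2 * n + 1" and ends_at_1: "height p (length p) = 1"
    using p unfolding lattice_paths_def by auto
  have "hd (rotate k p) = p ! k" if "k < 2 * n + 1" for k
    using that len by (subst hd_rotate_conv_nth) auto
  then have "{k. k < 2 * n + 1 \<and> hd (rotate k p) = b \<and> steps_below b (rotate k p) = Suc i}
      = {k\<in>positions b p. ?rank k = Suc i}"
    using steps_below_rotate[OF ends_at_1] len by (auto simp: positions_def)
  also have "card \<dots> = 1"
    by (rule card_bij_betw_fiber[OF bij_betw_rank])
      (use i in \<open>auto simp: positions_def intro: inj_on_subset[OF inj_height_key]\<close>)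
  finally show ?thesis .
qed

lemma card_lattice_paths_unique_rotation:
  assumes "\<And>p. p \<in> lattice_paths n \<Longrightarrow> card {k. k < 2 * n + 1 \<and> P (rotate k p)} = 1"
  shows "card {q\<in>lattice_paths n. P q} = catalan n"
proof (rule catalan_eqI)
  have "card (lattice_paths n) = (2 * n + 1) * card {q\<in>lattice_paths n. P q}"
    using assms
    by (intro card_eq_mult_card_rotation_representatives finite_lattice_paths rotate_in_lattice_paths)
      (auto simp: lattice_paths_def)
  then show "(2 * n + 1) * card {q\<in>lattice_paths n. P q} = (2 * n + 1) choose (n + 1)"
    by (simp add: card_lattice_paths)
qed

lemma card_paths_hd_steps:
  "card {p. (\<exists>n. p \<in> lattice_paths n) \<and> hd p = b \<and> steps_below b p = Suc i \<and> steps_above b p = j}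
    = catalan (i + j + (if b then 0 else 1))"
proof -
  define m where "m = i + j + (if b then 0 else 1)"
  have size: "steps_above b p = j \<longleftrightarrow> n = m"
    if "p \<in> lattice_paths n" "steps_below b p = Suc i" for p n
    using that steps_below_add_steps_above[of b p] card_positions_lattice_path[of p n b]
    unfolding m_def by (cases b) auto
  have "{p. (\<exists>n. p \<in> lattice_paths n) \<and> hd p = b \<and> steps_below b p = Suc i \<and> steps_above b p = j}
      = {p\<in>lattice_paths m. hd p = b \<and> steps_below b p = Suc i}"
    using size by blast
  also have "card \<dots> = catalan m"
    by (intro card_lattice_paths_unique_rotation card_rotations_hd_steps_below)
      (auto simp: card_positions_lattice_path m_def)
  finally show ?thesis by (simp add: m_def)
qed

lemma card_paths_verts:
  "card {p. (\<exists>n. p \<in> lattice_paths n) \<and> verts_below p = i \<and> verts_above p = Suc j}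
    = (if even (i + j) then catalan ((i + j) div 2) else 0)"
proof -
  have size: "verts_above p = Suc j \<longleftrightarrow> i + j = 2 * n"
    if "p \<in> lattice_paths n" "verts_below p = i" for p n
    using that verts_below_add_verts_above[of p] by (auto simp: lattice_paths_def)
  show ?thesis
  proof (cases "even (i + j)")
    case False
    have "\<not> (p \<in> lattice_paths n \<and> verts_below p = i \<and> verts_above p = Suc j)" for p n
    proof
      assume "p \<in> lattice_paths n \<and> verts_below p = i \<and> verts_above p = Suc j"
      then have "i + j = 2 * n" using size by blast
      then show False using False by simp
    qed
    then have "{p. (\<exists>n. p \<in> lattice_paths n) \<and> verts_below p = i \<and> verts_above p = Suc j} = {}"
      by blast
    then show ?thesis using False by (simp only: card.empty if_False)
  next
    case True
    define m where "m = (i + j) div 2"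
    have "verts_above p = Suc j \<longleftrightarrow> n = m"
      if "p \<in> lattice_paths n" "verts_below p = i" for p n
      using size[OF that] True by (auto simp: m_def)
    then have "{p. (\<exists>n. p \<in> lattice_paths n) \<and> verts_below p = i \<and> verts_above p = Suc j}
        = {p\<in>lattice_paths m. verts_below p = i}"
      by blast
    also have "card \<dots> = catalan m"
      using True by (intro card_lattice_paths_unique_rotation card_rotations_verts_below) (auto simp: m_def)
    finally show ?thesis using True by (simp add: m_def)
  qed
qed

theorem theorem10:
  shows "(\<forall>i j. coeff_f i j = catalan (i + j))
       \<and> (\<forall>i j. coeff_g i j = catalan (i + j + 1))
       \<and> (\<forall>i j. coeff_h i j = (if even (i + j) then catalan ((i + j) div 2) else 0))"
proof (intro conjI allI)
  fix i j
  show "coeff_f i j = catalan (i + j)"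
    using card_paths_hd_steps[of True i j] by (simp add: coeff_f_def steps_below_above_simps)
  show "coeff_g i j = catalan (i + j + 1)"
    using card_paths_hd_steps[of False i j] by (simp add: coeff_g_def steps_below_above_simps)
  show "coeff_h i j = (if even (i + j) then catalan ((i + j) div 2) else 0)"
    using card_paths_verts[of i j] by (simp add: coeff_h_def)
qed

end
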